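(* Let $(P,Q)$ be a negative semistandard notched bitableau with at least one box, and let $b$ be the minimum of all entries of $Q$. Then $P$ is semistandard on $b$.
   Context: A notched tableau $P$ is a finite sequence of rows $P_1,\dots,P_r$ (top to bottom), each a left-justified (possibly empty) row of boxes filled with positive integers. It is row strict if entries strictly increase left to right in each row; a row of a row-strict tableau is identified with the set of its entries. A notched bitableau $(P,Q)$ is a pair of notched tableaux of the same shape (same number of rows and same row lengths). For finite multisets $A=\{a_1\le\dots\le a_k\}$, $B=\{b_1\le\dots\le b_k\}$ of positive integers of equal size, $A\le B$ means $a_i\le b_i$ for all $i$, and $A\lessdot B$ means $A,B$ nonempty and $a_i<b_i$ for all $i$. For finite multisets $A,B,C,D$ with $|A|+|D|=|B|+|C|$, "$A-C\le B-D$" means $A\sqcup D\le B\sqcup C$ ($\sqcup$ = multiset union). $(P,Q)$ is semistandard if both are row strict and $P_1-Q_1\le P_2-Q_2\le\cdots\le P_r-Q_r$; it is negative if $P_i\lessdot Q_i$ for all $i$. For a row-strict $P$ and $b\in\mathbb{N}$, $P^{<b}$ is obtained by deleting all entries $\ge b$ (these lie at the right ends of rows); $P$ is semistandard on $b$ if the row lengths of $P^{<b}$ weakly decrease from top to bottom and the entries of $P^{<b}$ weakly increase down each column. *)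

theory Defs
  imports Main "HOL-Library.Multiset"
begin

text \<open>A notched tableau: a list of rows (top to bottom), each row a list of
  positive integers (left to right). Rows may be empty.\<close>
type_synonym tableau = "nat list list"

definition notched_tableau :: "tableau \<Rightarrow> bool" where
  "notched_tableau P \<longleftrightarrow> (\<forall>row \<in> set P. \<forall>x \<in> set row. 0 < x)"

definition same_shape :: "tableau \<Rightarrow> tableau \<Rightarrow> bool" where
  "same_shape P Q \<longleftrightarrow> length P = length Q \<and>
     (\<forall>i < length P. length (P ! i) = length (Q ! i))"

definition row_strict :: "tableau \<Rightarrow> bool" where
  "row_strict P \<longleftrightarrow> (\<forall>row \<in> set P. sorted_wrt (<) row)"

definition mset_le :: "nat multiset \<Rightarrow> nat multiset \<Rightarrow> bool" where
  "mset_le A B \<longleftrightarrow> size A = size B \<and>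
     (\<forall>i < size A. sorted_list_of_multiset A ! i \<le> sorted_list_of_multiset B ! i)"

definition mset_lessdot :: "nat multiset \<Rightarrow> nat multiset \<Rightarrow> bool" where
  "mset_lessdot A B \<longleftrightarrow> A \<noteq> {#} \<and> B \<noteq> {#} \<and> size A = size B \<and>
     (\<forall>i < size A. sorted_list_of_multiset A ! i < sorted_list_of_multiset B ! i)"

text \<open>"A - C \<le> B - D" means A + D \<le> B + C (with |A|+|D| = |B|+|C|).\<close>
definition diff_le :: "nat multiset \<Rightarrow> nat multiset \<Rightarrow> nat multiset \<Rightarrow> nat multiset \<Rightarrow> bool" where
  "diff_le A C B D \<longleftrightarrow> size A + size D = size B + size C \<and> mset_le (A + D) (B + C)"

definition semistandard_bitableau :: "tableau \<Rightarrow> tableau \<Rightarrow> bool" where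
  "semistandard_bitableau P Q \<longleftrightarrow> row_strict P \<and> row_strict Q \<and>
     (\<forall>i. Suc i < length P \<longrightarrow>
        diff_le (mset (P ! i)) (mset (Q ! i)) (mset (P ! Suc i)) (mset (Q ! Suc i)))"

definition negative_bitableau :: "tableau \<Rightarrow> tableau \<Rightarrow> bool" where
  "negative_bitableau P Q \<longleftrightarrow> (\<forall>i < length P. mset_lessdot (mset (P ! i)) (mset (Q ! i)))"

definition restrict_below :: "tableau \<Rightarrow> nat \<Rightarrow> tableau" where
  "restrict_below P b = map (filter (\<lambda>x. x < b)) P"

definition semistandard_on :: "tableau \<Rightarrow> nat \<Rightarrow> bool" where
  "semistandard_on P b \<longleftrightarrow> (let R = restrict_below P b in
     (\<forall>i. Suc i < length R \<longrightarrow> length (R ! Suc i) \<le> length (R ! i)) \<and>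
     (\<forall>i j. Suc i < length R \<longrightarrow> j < length (R ! Suc i) \<longrightarrow> j < length (R ! i) \<longrightarrow>
        R ! i ! j \<le> R ! Suc i ! j))"

definition entries :: "tableau \<Rightarrow> nat set" where
  "entries P = (\<Union>row \<in> set P. set row)"

definition num_boxes :: "tableau \<Rightarrow> nat" where
  "num_boxes P = sum_list (map length P)"

end

theory Submission
  imports Defs
begin

text \<open>Since every entry of \<open>Q\<close> is at least \<open>b\<close>, the entries below \<open>b\<close> of the merged
  rows \<open>P\<^sub>i \<union> Q\<^sub>i\<^sub>+\<^sub>1\<close> and \<open>P\<^sub>i\<^sub>+\<^sub>1 \<union> Q\<^sub>i\<close> are exactly those of \<open>P\<^sub>i\<close> and \<open>P\<^sub>i\<^sub>+\<^sub>1\<close>, and they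
  form initial segments of the sorted merged rows. The semistandard condition
  \<open>P\<^sub>i - Q\<^sub>i \<le> P\<^sub>i\<^sub>+\<^sub>1 - Q\<^sub>i\<^sub>+\<^sub>1\<close> compares the merged rows entrywise, and entrywise domination
  passes to these initial segments: the one of the smaller row is the longer one and
  is entrywise smaller.\<close>

lemma sorted_filter_less_eq_takeWhile:
  fixes xs :: "'a::linorder list"
  assumes "sorted xs"
  shows "filter (\<lambda>x. x < b) xs = takeWhile (\<lambda>x. x < b) xs"
  using assms
proof (induction xs)
  case (Cons a xs)
  show ?case
  proof (cases "a < b")
    case True
    then show ?thesis using Cons by simp
  next
    case False
    then have "filter (\<lambda>x. x < b) xs = []"
      using Cons.prems by (auto simp: filter_empty_conv)
    then show ?thesis using False by simp
  qed
qed simp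

lemma list_all2_le_takeWhile_less:
  fixes xs ys :: "'a::linorder list"
  assumes "list_all2 (\<le>) xs ys"
  shows "length (takeWhile (\<lambda>x. x < b) ys) \<le> length (takeWhile (\<lambda>x. x < b) xs)"
    and "j < length (takeWhile (\<lambda>x. x < b) ys) \<Longrightarrow> j < length (takeWhile (\<lambda>x. x < b) xs) \<Longrightarrow>
         takeWhile (\<lambda>x. x < b) xs ! j \<le> takeWhile (\<lambda>x. x < b) ys ! j"
proof -
  show "length (takeWhile (\<lambda>x. x < b) ys) \<le> length (takeWhile (\<lambda>x. x < b) xs)"
    using assms by (induction rule: list_all2_induct) auto
  assume "j < length (takeWhile (\<lambda>x. x < b) ys)" "j < length (takeWhile (\<lambda>x. x < b) xs)"
  then show "takeWhile (\<lambda>x. x < b) xs ! j \<le> takeWhile (\<lambda>x. x < b) ys ! j"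
    using assms less_le_trans[OF _ length_takeWhile_le[of "\<lambda>x. x < b" xs]]
    by (simp add: takeWhile_nth list_all2_conv_all_nth)
qed

lemma mset_le_iff_list_all2:
  "mset_le A B \<longleftrightarrow> list_all2 (\<le>) (sorted_list_of_multiset A) (sorted_list_of_multiset B)"
proof -
  have "length (sorted_list_of_multiset M) = size M" for M :: "nat multiset"
    by (metis mset_sorted_list_of_multiset size_mset)
  then show ?thesis
    unfolding mset_le_def list_all2_conv_all_nth by simp
qed

lemma filter_less_sorted_list_of_multiset_union:
  fixes M N :: "'a::linorder multiset"
  assumes "\<forall>x\<in>#N. b \<le> x"
  shows "filter (\<lambda>x. x < b) (sorted_list_of_multiset (M + N))
       = filter (\<lambda>x. x < b) (sorted_list_of_multiset M)"
proof -
  obtain xs ys where "M = mset xs" "N = mset ys"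
    by (metis ex_mset)
  moreover have "filter (\<lambda>x. x < b) ys = []"
    using assms \<open>N = mset ys\<close> by (auto simp: filter_empty_conv)
  ultimately show ?thesis
    by (metis filter_append filter_sort mset_append self_append_conv sorted_list_of_multiset_mset)
qed

lemma diff_le_filter_less:
  assumes "diff_le (mset p) (mset q) (mset p') (mset q')"
    and "sorted p" and "sorted p'"
    and "\<forall>x\<in>set q. b \<le> x" and "\<forall>x\<in>set q'. b \<le> x"
  shows "length (filter (\<lambda>x. x < b) p') \<le> length (filter (\<lambda>x. x < b) p)"
    and "j < length (filter (\<lambda>x. x < b) p') \<Longrightarrow> j < length (filter (\<lambda>x. x < b) p) \<Longrightarrow>
         filter (\<lambda>x. x < b) p ! j \<le> filter (\<lambda>x. x < b) p' ! j"
proof -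
  define xs where "xs = sorted_list_of_multiset (mset p + mset q')"
  define ys where "ys = sorted_list_of_multiset (mset p' + mset q)"
  have dominated: "list_all2 (\<le>) xs ys"
    using assms(1) unfolding diff_le_def mset_le_iff_list_all2 xs_def ys_def by simp
  have "filter (\<lambda>x. x < b) p = takeWhile (\<lambda>x. x < b) xs"
    using filter_less_sorted_list_of_multiset_union[of "mset q'" b "mset p"] assms(2,5)
    by (simp add: xs_def sorted_filter_less_eq_takeWhile sorted_sort_id)
  moreover have "filter (\<lambda>x. x < b) p' = takeWhile (\<lambda>x. x < b) ys"
    using filter_less_sorted_list_of_multiset_union[of "mset q" b "mset p'"] assms(3,4)
    by (simp add: ys_def sorted_filter_less_eq_takeWhile sorted_sort_id)
  ultimately show "length (filter (\<lambda>x. x < b) p') \<le> length (filter (\<lambda>x. x < b) p)"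
    and "j < length (filter (\<lambda>x. x < b) p') \<Longrightarrow> j < length (filter (\<lambda>x. x < b) p) \<Longrightarrow>
         filter (\<lambda>x. x < b) p ! j \<le> filter (\<lambda>x. x < b) p' ! j"
    using list_all2_le_takeWhile_less[OF dominated] by simp_all
qed

theorem lemma5p2:
  fixes P Q :: tableau
  assumes "notched_tableau P" and "notched_tableau Q"
    and "same_shape P Q"
    and "semistandard_bitableau P Q"
    and "negative_bitableau P Q"
    and "num_boxes P > 0"
  shows "semistandard_on P (Min (entries Q))"
proof -
  define b where "b = Min (entries Q)"
  have Q_ge_b: "\<forall>x\<in>set (Q ! i). b \<le> x" if "i < length P" for i
    using that assms(3)
    by (auto simp: b_def entries_def same_shape_def intro!: Min_le bexI[OF _ nth_mem])
  have P_sorted: "sorted (P ! i)" if "i < length P" for i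
    using that assms(4) by (auto simp: semistandard_bitableau_def row_strict_def strict_sorted_iff)
  have "diff_le (mset (P ! i)) (mset (Q ! i)) (mset (P ! Suc i)) (mset (Q ! Suc i))"
    if "Suc i < length P" for i
    using that assms(4) by (simp add: semistandard_bitableau_def)
  note rows = diff_le_filter_less[OF this P_sorted P_sorted Q_ge_b Q_ge_b]
  show ?thesis
    unfolding semistandard_on_def restrict_below_def b_def[symmetric]
    using rows by simp
qed

end
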